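(* If $m\ge 1$, $t\ge 1$ and $n=m(2^t-1)$, then \[s\text{-}sat(Q_n,Q_m)\le\Big(\frac{m^2}{2}+\frac{m}{2}\Big)2^n.\]
   Context: $Q_n$ is the hypercube on $\{0,1\}^n$ with edges between vertices differing in exactly one coordinate. A copy of $F$ is a subgraph isomorphic to $F$. A graph $G$ is $(Q_n,F)$-semi-saturated if $G\subseteq Q_n$ and adding any edge of $E(Q_n)\setminus E(G)$ increases the number of copies of $F$. $s\text{-}sat(Q_n,F)$ is the minimum number of edges of such a graph. *)

theory Defs
  imports Complex_Main
begin

text \<open>The hypercube Q_n: vertices are the subsets of {0..<n} (characteristic
  vectors of 0/1 strings of length n); two vertices are adjacent iff their
  symmetric difference has exactly one element (differ in exactly one coordinate).\<close>

definition hyp_verts :: "nat \<Rightarrow> nat set set" where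
  "hyp_verts n = Pow {..<n}"

definition hyp_edges :: "nat \<Rightarrow> nat set set set" where
  "hyp_edges n = {{A, B} | A B. A \<in> hyp_verts n \<and> B \<in> hyp_verts n \<and>
                      card ((A - B) \<union> (B - A)) = 1}"

definition copies :: "'a set \<Rightarrow> 'a set set \<Rightarrow> 'b set \<Rightarrow> 'b set set \<Rightarrow> ('b set \<times> 'b set set) set" where
  "copies VF EF V E = {(W, D). W \<subseteq> V \<and> D \<subseteq> E \<and>
      (\<exists>f. bij_betw f VF W \<and> D = (\<lambda>e. f ` e) ` EF)}"

definition semi_saturated :: "nat \<Rightarrow> 'a set \<Rightarrow> 'a set set \<Rightarrow> nat set set set \<Rightarrow> bool" where
  "semi_saturated n VF EF E \<longleftrightarrow> E \<subseteq> hyp_edges n \<and>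
     (\<forall>e \<in> hyp_edges n - E.
        card (copies VF EF (hyp_verts n) (insert e E)) > card (copies VF EF (hyp_verts n) E))"

definition s_sat :: "nat \<Rightarrow> 'a set \<Rightarrow> 'a set set \<Rightarrow> nat" where
  "s_sat n VF EF = Min (card ` {E. semi_saturated n VF EF E})"

end

theory Submission
  imports Defs
begin

(* Split the n coordinates into m blocks of k = 2^t - 1 coordinates and label the k
   coordinates of each block bijectively by the nonzero vectors of GF(2)^t (subsets of
   {0..<t}).  For a vertex A (a subset of {0..<n}) the block sum of block l is the GF(2)-sum
   of the labels of the coordinates of A in that block; A is degenerate if some block sum
   vanishes.  The graph sat_graph consists of the edges of Q_n with a degenerate endpoint.

   Counting: each block sum vanishes on a 2^-t fraction of the vertices, and for the edge of
   A in direction c only the m block sums of A and the block sum of c's block at A + c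
   matter, so sat_graph has at most n (m+1) 2^(n-t) / 2 <= m (m+1) 2^n / 2 edges.

   Semi-saturation: if the edge {A, A + c} is missing, every block sum of A is nonzero and
   hence the label of some coordinate phi(l) of block l (for the block of c put phi = c).
   The subcube X |-> A + phi(X) is a copy of Q_m through the missing edge all of whose other
   edges have a degenerate endpoint, so adding the edge creates a new copy of Q_m. *)

lemma hyp_edge_toggle:
  assumes "A \<subseteq> {..<n}" and "c < n"
  shows "{A, sym_diff A {c}} \<in> hyp_edges n"
proof -
  have "sym_diff A (sym_diff A {c}) = {c}" by blast
  then have "card (sym_diff A (sym_diff A {c})) = 1" by simp
  moreover have "A \<in> Pow {..<n}" "sym_diff A {c} \<in> Pow {..<n}" using assms by auto
  ultimately show ?thesis unfolding hyp_edges_def hyp_verts_def by blast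
qed

lemma hyp_edges_lower:
  "hyp_edges n = {{A, insert c A} | A c. A \<subseteq> {..<n} \<and> c < n \<and> c \<notin> A}"
proof (intro equalityI subsetI)
  fix e assume "e \<in> hyp_edges n"
  then obtain A B where e: "e = {A, B}" "A \<subseteq> {..<n}" "B \<subseteq> {..<n}"
    and "card (sym_diff A B) = 1"
    unfolding hyp_edges_def hyp_verts_def by auto
  then obtain c where c: "sym_diff A B = {c}" by (meson card_1_singletonE)
  then have B: "B = sym_diff A {c}" and "c < n" using e by blast+
  show "e \<in> {{A, insert c A} | A c. A \<subseteq> {..<n} \<and> c < n \<and> c \<notin> A}"
  proof (cases "c \<in> A")
    case True
    then have "e = {B, insert c B}" "c \<notin> B" using e(1) B by blast+
    then show ?thesis using e(3) \<open>c < n\<close> by blast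
  next
    case False
    then have "e = {A, insert c A}" using e(1) B by blast
    then show ?thesis using e(2) \<open>c < n\<close> False by blast
  qed
next
  fix e assume "e \<in> {{A, insert c A} | A c. A \<subseteq> {..<n} \<and> c < n \<and> c \<notin> A}"
  then obtain A c where "e = {A, insert c A}" "A \<subseteq> {..<n}" "c < n" "c \<notin> A" by blast
  moreover have "sym_diff A {c} = insert c A" using \<open>c \<notin> A\<close> by blast
  ultimately show "e \<in> hyp_edges n" using hyp_edge_toggle by metis
qed

lemma hyp_edges_finite: "finite (hyp_edges n)"
proof (rule finite_subset)
  show "hyp_edges n \<subseteq> Pow (hyp_verts n)" unfolding hyp_edges_def by blast
  show "finite (Pow (hyp_verts n))" unfolding hyp_verts_def by simp
qed

lemma s_sat_le:
  assumes "semi_saturated n VF EF E"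
  shows "s_sat n VF EF \<le> card E"
proof -
  have "{E. semi_saturated n VF EF E} \<subseteq> Pow (hyp_edges n)"
    unfolding semi_saturated_def by blast
  then have "finite {E. semi_saturated n VF EF E}"
    using hyp_edges_finite finite_subset by blast
  then show ?thesis unfolding s_sat_def using assms by (intro Min_le) auto
qed

lemma toggle_twice: "sym_diff (sym_diff A {c}) {c} = A"
  by blast

lemma odd_card_toggle:
  assumes "finite S"
  shows "odd (card (sym_diff S {c})) \<longleftrightarrow> even (card S)"
proof (cases "c \<in> S")
  case True
  then have "card S = Suc (card (S - {c}))" using assms card_Suc_Diff1 by metis
  moreover have "sym_diff S {c} = S - {c}" using True by blast
  ultimately show ?thesis by simp
next
  case False
  then have "card (insert c S) = Suc (card S)" using assms by simp
  moreover have "sym_diff S {c} = insert c S" using False by blast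
  ultimately show ?thesis by simp
qed

lemma toggle_half:
  assumes "finite P" and closed: "\<And>A. A \<in> P \<Longrightarrow> sym_diff A {c} \<in> P"
  shows "2 * card {A \<in> P. c \<notin> A} \<le> card P"
proof -
  let ?P0 = "{A \<in> P. c \<notin> A}" and ?P1 = "{A \<in> P. c \<in> A}"
  have "card ?P0 \<le> card ?P1"
  proof (rule card_inj_on_le)
    show "inj_on (insert c) ?P0" by (rule inj_onI) (metis (mono_tags) Diff_insert_absorb mem_Collect_eq)
    show "insert c ` ?P0 \<subseteq> ?P1"
    proof (rule image_subsetI)
      fix A assume "A \<in> ?P0"
      then have "A \<in> P" "c \<notin> A" by auto
      moreover have "sym_diff A {c} = insert c A" using \<open>c \<notin> A\<close> by blast
      ultimately show "insert c A \<in> ?P1" using closed by (metis insertI1 mem_Collect_eq)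
    qed
    show "finite ?P1" using assms by simp
  qed
  moreover have "card (?P0 \<union> ?P1) = card ?P0 + card ?P1"
    by (rule card_Un_disjoint) (use assms in auto)
  moreover have "?P0 \<union> ?P1 = P" by blast
  ultimately show ?thesis by simp
qed

(* The subcube of Q_n based at A spanned by the coordinates phi 0, ..., phi (m - 1):
   the image of a vertex X of Q_m. *)
definition cube_map :: "nat set \<Rightarrow> (nat \<Rightarrow> nat) \<Rightarrow> nat set \<Rightarrow> nat set" where
  "cube_map A phi X = sym_diff A (phi ` X)"

lemma cube_map_vert:
  assumes "A \<subseteq> {..<n}" "phi ` {..<m} \<subseteq> {..<n}" "X \<subseteq> {..<m}"
  shows "cube_map A phi X \<subseteq> {..<n}"
  using assms unfolding cube_map_def by blast

lemma cube_map_inj: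
  assumes "inj_on phi {..<m}"
  shows "inj_on (cube_map A phi) (Pow {..<m})"
proof (rule inj_onI)
  fix X Y assume XY: "X \<in> Pow {..<m}" "Y \<in> Pow {..<m}" "cube_map A phi X = cube_map A phi Y"
  then have "phi ` X = phi ` Y" unfolding cube_map_def by blast
  then show "X = Y" using assms XY(1,2) by (simp add: inj_on_image_eq_iff)
qed

lemma cube_map_insert:
  assumes "inj_on phi {..<m}" "X \<subseteq> {..<m}" "j < m" "j \<notin> X"
  shows "cube_map A phi (insert j X) = sym_diff (cube_map A phi X) {phi j}"
proof -
  have notin: "phi j \<notin> phi ` X" using assms by (simp add: inj_on_image_mem_iff)
  have "\<And>p P. p \<notin> P \<Longrightarrow> sym_diff A (insert p P) = sym_diff (sym_diff A P) {p}" by blast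
  from this[OF notin] show ?thesis unfolding cube_map_def image_insert .
qed

lemma new_copy_card:
  fixes f :: "'a \<Rightarrow> nat set"
  assumes E: "E \<subseteq> hyp_edges n" and e: "e \<in> hyp_edges n" "e \<notin> E"
    and f: "inj_on f VF" "f ` VF \<subseteq> hyp_verts n"
    and image_edges: "(\<lambda>d. f ` d) ` EF \<subseteq> insert e E"
    and e_image: "e \<in> (\<lambda>d. f ` d) ` EF"
  shows "card (copies VF EF (hyp_verts n) E) < card (copies VF EF (hyp_verts n) (insert e E))"
proof (rule psubset_card_mono)
  have "finite (insert e E)" using E hyp_edges_finite finite_subset by blast
  then have "finite (Pow (hyp_verts n) \<times> Pow (insert e E))" unfolding hyp_verts_def by simp
  moreover have "copies VF EF (hyp_verts n) (insert e E) \<subseteq> Pow (hyp_verts n) \<times> Pow (insert e E)"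
    unfolding copies_def by auto
  ultimately show "finite (copies VF EF (hyp_verts n) (insert e E))" by (rule finite_subset[rotated])
  let ?copy = "(f ` VF, (\<lambda>d. f ` d) ` EF)"
  have "bij_betw f VF (f ` VF)" using f(1) by (rule inj_on_imp_bij_betw)
  then have "?copy \<in> copies VF EF (hyp_verts n) (insert e E)"
    unfolding copies_def using f(2) image_edges by blast
  moreover have "?copy \<notin> copies VF EF (hyp_verts n) E"
  proof
    assume "?copy \<in> copies VF EF (hyp_verts n) E"
    then have "(\<lambda>d. f ` d) ` EF \<subseteq> E" unfolding copies_def by simp
    then show False using e(2) e_image by blast
  qed
  moreover have "copies VF EF (hyp_verts n) E \<subseteq> copies VF EF (hyp_verts n) (insert e E)"
    unfolding copies_def by blast
  ultimately show "copies VF EF (hyp_verts n) E \<subset> copies VF EF (hyp_verts n) (insert e E)"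
    by blast
qed

(* The coordinates x < n = m k form m blocks (x div k) of k positions (x mod k); position p is
   labelled by the nonzero vector g p of GF(2)^t, each nonzero vector occurring exactly once. *)
locale block_labelling =
  fixes m t k n :: nat and g :: "nat \<Rightarrow> nat set"
  assumes t_pos: "t \<ge> 1"
    and n_def: "n = m * k"
    and g_bij: "bij_betw g {..<k} (Pow {..<t} - {{}})"
begin

lemma k_eq: "k = 2 ^ t - 1"
proof -
  have "k = card (Pow {..<t} - {{}} :: nat set set)"
    using bij_betw_same_card[OF g_bij] by simp
  also have "\<dots> = 2 ^ t - 1" by (simp add: card_Pow)
  finally show ?thesis .
qed

lemma k_pos: "0 < k"
proof -
  have "(2::nat) ^ 1 \<le> 2 ^ t" using t_pos by (intro power_increasing) auto
  then show ?thesis using k_eq by simp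
qed

lemma block_lt: "c < n \<Longrightarrow> c div k < m"
  using n_def by (simp add: less_mult_imp_div_less)

lemma coord:
  assumes "l < m" "p < k"
  shows "l * k + p < n" "(l * k + p) div k = l" "(l * k + p) mod k = p"
proof -
  have "l * k + p < Suc l * k" using assms by simp
  also have "\<dots> \<le> m * k" using assms by (intro mult_le_mono1) simp
  finally show "l * k + p < n" using n_def by simp
  show "(l * k + p) div k = l" "(l * k + p) mod k = p" using assms by auto
qed

definition label_pos :: "nat set \<Rightarrow> nat" where
  "label_pos S = inv_into {..<k} g S"

lemma label_pos:
  assumes "S \<subseteq> {..<t}" "S \<noteq> {}"
  shows "label_pos S < k" "g (label_pos S) = S"
proof -
  have S: "S \<in> g ` {..<k}" using g_bij assms unfolding bij_betw_def by auto
  show "label_pos S < k" using inv_into_into[OF S] unfolding label_pos_def by simp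
  show "g (label_pos S) = S" using f_inv_into_f[OF S] unfolding label_pos_def .
qed

lemma label_subset: "p < k \<Longrightarrow> g p \<subseteq> {..<t}"
  using bij_betwE[OF g_bij] by blast

(* The GF(2)-sum of the labels of the coordinates of A lying in block l. *)
definition block_sum :: "nat \<Rightarrow> nat set \<Rightarrow> nat set" where
  "block_sum l A = {b. b < t \<and> odd (card {x \<in> A. x div k = l \<and> b \<in> g (x mod k)})}"

lemma block_sum_subset: "block_sum l A \<subseteq> {..<t}"
  unfolding block_sum_def by auto

lemma block_sum_local:
  assumes "A \<inter> {x. x div k = l} = B \<inter> {x. x div k = l}"
  shows "block_sum l A = block_sum l B"
proof -
  have "{x \<in> A. x div k = l \<and> b \<in> g (x mod k)} = {x \<in> B. x div k = l \<and> b \<in> g (x mod k)}" for b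
    using assms by blast
  then show ?thesis unfolding block_sum_def by simp
qed

lemma block_sum_toggle_other: "c div k \<noteq> l \<Longrightarrow> block_sum l (sym_diff A {c}) = block_sum l A"
  by (rule block_sum_local) auto

lemma block_sum_toggle:
  assumes "finite A" "c div k = l"
  shows "block_sum l (sym_diff A {c}) = sym_diff (block_sum l A) (g (c mod k))"
proof -
  let ?S = "\<lambda>A b. {x \<in> A. x div k = l \<and> b \<in> g (x mod k)}"
  have "b \<in> block_sum l (sym_diff A {c}) \<longleftrightarrow> b \<in> sym_diff (block_sum l A) (g (c mod k))" for b
  proof (cases "b \<in> g (c mod k)")
    case True
    have "b < t" using True label_subset[of "c mod k"] k_pos by auto
    have "?S (sym_diff A {c}) b = sym_diff (?S A b) {c}" using True assms(2) by blast
    then have "odd (card (?S (sym_diff A {c}) b)) \<longleftrightarrow> even (card (?S A b))"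
      using odd_card_toggle[of "?S A b" c] assms(1) by simp
    then show ?thesis using True \<open>b < t\<close> unfolding block_sum_def by simp
  next
    case False
    then have "?S (sym_diff A {c}) b = ?S A b" by blast
    then show ?thesis using False unfolding block_sum_def by auto
  qed
  then show ?thesis by blast
qed

definition block_shift :: "nat \<Rightarrow> nat set \<Rightarrow> nat set \<Rightarrow> nat set" where
  "block_shift l A S = (if S = {} then A else sym_diff A {l * k + label_pos S})"

lemma block_shift:
  assumes "l < m" "A \<subseteq> {..<n}" "S \<subseteq> {..<t}"
  shows "block_sum l (block_shift l A S) = sym_diff (block_sum l A) S"
    and "block_shift l A S \<subseteq> {..<n}"
proof -
  have p: "label_pos S < k" "g (label_pos S) = S" if "S \<noteq> {}"
    using label_pos assms(3) that by auto
  have "finite A" using assms(2) finite_subset by blast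
  show "block_sum l (block_shift l A S) = sym_diff (block_sum l A) S"
  proof (cases "S = {}")
    case False
    show ?thesis
      using block_sum_toggle[OF \<open>finite A\<close> coord(2)[OF assms(1) p(1)[OF False]]]
        coord(3)[OF assms(1) p(1)[OF False]] p(2)[OF False] False
      unfolding block_shift_def by simp
  qed (simp add: block_shift_def)
  show "block_shift l A S \<subseteq> {..<n}"
  proof (cases "S = {}")
    case False
    show ?thesis
      using coord(1)[OF assms(1) p(1)[OF False]] assms(2) False unfolding block_shift_def by auto
  qed (use assms in \<open>simp add: block_shift_def\<close>)
qed

lemma block_shift_inj: "block_shift l A S = block_shift l B S \<Longrightarrow> A = B"
  unfolding block_shift_def by (cases "S = {}") (simp_all, metis toggle_twice)

(* Each block sum vanishes on at most a 2^-t fraction of the vertices: shifting the zero set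
   by the 2^t vectors of GF(2)^t gives pairwise disjoint sets of vertices. *)
lemma zero_block_card:
  assumes "l < m"
  shows "card {A \<in> Pow {..<n}. block_sum l A = {}} * 2 ^ t \<le> 2 ^ n"
proof -
  let ?Z = "{A \<in> Pow {..<n}. block_sum l A = {}}"
  let ?shift = "\<lambda>(A, S). block_shift l A S"
  have "inj_on ?shift (?Z \<times> Pow {..<t})"
  proof (rule inj_onI)
    fix p q assume p: "p \<in> ?Z \<times> Pow {..<t}" and q: "q \<in> ?Z \<times> Pow {..<t}"
      and eq: "?shift p = ?shift q"
    obtain A S B T where pq: "p = (A, S)" "q = (B, T)" by fastforce
    have A: "A \<subseteq> {..<n}" "block_sum l A = {}" "S \<subseteq> {..<t}" using p unfolding pq by auto
    have B: "B \<subseteq> {..<n}" "block_sum l B = {}" "T \<subseteq> {..<t}" using q unfolding pq by auto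
    have "S = block_sum l (block_shift l A S)" using block_shift(1)[OF assms A(1,3)] A(2) by simp
    also have "\<dots> = block_sum l (block_shift l B T)" using eq unfolding pq by simp
    also have "\<dots> = T" using block_shift(1)[OF assms B(1,3)] B(2) by simp
    finally have "S = T" .
    then have "A = B" using eq block_shift_inj unfolding pq by simp
    then show "p = q" using pq \<open>S = T\<close> by simp
  qed
  moreover have "?shift ` (?Z \<times> Pow {..<t}) \<subseteq> Pow {..<n}"
    using block_shift(2)[OF assms] by auto
  ultimately have "card (?Z \<times> Pow {..<t}) \<le> card (Pow {..<n} :: nat set set)"
    by (intro card_inj_on_le) auto
  then show ?thesis by (simp add: card_cartesian_product card_Pow)
qed

definition degenerate :: "nat set \<Rightarrow> bool" where
  "degenerate A \<longleftrightarrow> (\<exists>l<m. block_sum l A = {})"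

definition sat_graph :: "nat set set set" where
  "sat_graph = {e \<in> hyp_edges n. \<exists>A \<in> e. degenerate A}"

definition degenerate_along :: "nat \<Rightarrow> nat set set" where
  "degenerate_along c = {A \<in> Pow {..<n}. degenerate A \<or> degenerate (sym_diff A {c})}"

(* Only block c div k differs between A and its neighbour in direction c, so m + 1 zero
   sets cover degenerate_along c. *)
lemma degenerate_along_card:
  assumes "c < n"
  shows "card (degenerate_along c) * 2 ^ t \<le> (m + 1) * 2 ^ n"
proof -
  let ?Z = "\<lambda>l. {A \<in> Pow {..<n}. block_sum l A = {}}"
  let ?b = "c div k"
  have b: "?b < m" using block_lt assms .
  have "degenerate_along c \<subseteq> (\<Union>l<m. ?Z l) \<union> (\<lambda>A. sym_diff A {c}) ` ?Z ?b"
  proof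
    fix A assume A: "A \<in> degenerate_along c"
    show "A \<in> (\<Union>l<m. ?Z l) \<union> (\<lambda>A. sym_diff A {c}) ` ?Z ?b"
    proof (cases "degenerate A")
      case True
      then show ?thesis using A unfolding degenerate_def degenerate_along_def by blast
    next
      case False
      then obtain l where l: "l < m" "block_sum l (sym_diff A {c}) = {}"
        using A unfolding degenerate_along_def degenerate_def by blast
      have A': "sym_diff A {c} \<in> Pow {..<n}" using A assms unfolding degenerate_along_def by auto
      show ?thesis
      proof (cases "l = ?b")
        case True
        have "A = sym_diff (sym_diff A {c}) {c}" by (rule toggle_twice[symmetric])
        then show ?thesis using A' l True by blast
      next
        case False
        then have "block_sum l A = {}" using l block_sum_toggle_other by metis
        then show ?thesis using A l unfolding degenerate_along_def by blast
      qed
    qed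
  qed
  then have "card (degenerate_along c) \<le> card ((\<Union>l<m. ?Z l) \<union> (\<lambda>A. sym_diff A {c}) ` ?Z ?b)"
    by (rule card_mono[rotated]) auto
  also have "\<dots> \<le> card (\<Union>l<m. ?Z l) + card ((\<lambda>A. sym_diff A {c}) ` ?Z ?b)"
    by (rule card_Un_le)
  also have "\<dots> \<le> (\<Sum>l<m. card (?Z l)) + card (?Z ?b)"
    by (intro add_mono card_UN_le card_image_le) auto
  finally have "card (degenerate_along c) * 2 ^ t \<le> ((\<Sum>l<m. card (?Z l)) + card (?Z ?b)) * 2 ^ t"
    by (rule mult_le_mono1)
  also have "\<dots> = (\<Sum>l<m. card (?Z l) * 2 ^ t) + card (?Z ?b) * 2 ^ t"
    by (simp add: add_mult_distrib sum_distrib_right)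
  also have "\<dots> \<le> (\<Sum>l<m. 2 ^ n) + 2 ^ n"
    by (intro add_mono sum_mono zero_block_card b) simp
  finally show ?thesis by simp
qed

(* Counting the edges of sat_graph by their lower endpoint and direction. *)
lemma sat_graph_card: "2 * card sat_graph \<le> m * (m + 1) * 2 ^ n"
proof -
  let ?low = "\<lambda>c. {A \<in> degenerate_along c. c \<notin> A}"
  have fin: "finite (?low c)" for c
    by (rule finite_subset[of _ "Pow {..<n}"]) (auto simp: degenerate_along_def)
  have cover: "sat_graph \<subseteq> (\<Union>c<n. (\<lambda>A. {A, insert c A}) ` ?low c)"
  proof
    fix e assume "e \<in> sat_graph"
    then obtain A c where e: "e = {A, insert c A}" "A \<subseteq> {..<n}" "c < n" "c \<notin> A"
      and "\<exists>B \<in> e. degenerate B"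
      unfolding sat_graph_def hyp_edges_lower by blast
    then have "degenerate A \<or> degenerate (insert c A)" by simp
    moreover have "sym_diff A {c} = insert c A" using e(4) by blast
    ultimately have "A \<in> ?low c" using e(2,4) unfolding degenerate_along_def by simp
    then show "e \<in> (\<Union>c<n. (\<lambda>A. {A, insert c A}) ` ?low c)" using e(1,3) by blast
  qed
  have "card sat_graph \<le> card (\<Union>c<n. (\<lambda>A. {A, insert c A}) ` ?low c)"
    by (rule card_mono[OF _ cover]) (simp add: fin)
  also have "\<dots> \<le> (\<Sum>c<n. card ((\<lambda>A. {A, insert c A}) ` ?low c))"
    by (rule card_UN_le) simp
  also have "\<dots> \<le> (\<Sum>c<n. card (?low c))"
    by (intro sum_mono card_image_le fin)
  finally have "2 * card sat_graph * 2 ^ t \<le> 2 * (\<Sum>c<n. card (?low c)) * 2 ^ t"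
    by simp
  also have "\<dots> = (\<Sum>c<n. 2 * card (?low c) * 2 ^ t)"
    by (simp add: sum_distrib_left sum_distrib_right)
  also have "\<dots> \<le> (\<Sum>c<n. (m + 1) * 2 ^ n)"
  proof (rule sum_mono)
    fix c assume "c \<in> {..<n}"
    then have c: "c < n" by simp
    have "2 * card (?low c) \<le> card (degenerate_along c)"
    proof (rule toggle_half)
      show "finite (degenerate_along c)" unfolding degenerate_along_def by simp
      fix A assume "A \<in> degenerate_along c"
      then show "sym_diff A {c} \<in> degenerate_along c"
        using c toggle_twice[of A c] unfolding degenerate_along_def by auto
    qed
    then show "2 * card (?low c) * 2 ^ t \<le> (m + 1) * 2 ^ n"
      using degenerate_along_card[OF c] by (meson mult_le_mono1 order_trans)
  qed
  also have "\<dots> = (m * (m + 1) * 2 ^ n) * k" using n_def by (simp add: algebra_simps)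
  also have "\<dots> \<le> (m * (m + 1) * 2 ^ n) * 2 ^ t" using k_eq by simp
  finally show ?thesis by simp
qed

(* For a non-degenerate A and a direction c: the coordinate of block j used as the j-th
   direction of the embedded subcube; it is c in the block of c, and otherwise a coordinate
   whose label is the block sum of A. *)
definition cube_coord :: "nat set \<Rightarrow> nat \<Rightarrow> nat \<Rightarrow> nat" where
  "cube_coord A c j = (if j = c div k then c else j * k + label_pos (block_sum j A))"

lemma cube_coord:
  assumes "\<not> degenerate A" "c < n" "j < m"
  shows "cube_coord A c j < n" "cube_coord A c j div k = j"
    and "j \<noteq> c div k \<Longrightarrow> g (cube_coord A c j mod k) = block_sum j A"
proof -
  have "j \<noteq> c div k \<Longrightarrow> label_pos (block_sum j A) < k \<and> g (label_pos (block_sum j A)) = block_sum j A"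
    using assms(1,3) label_pos[OF block_sum_subset] unfolding degenerate_def by blast
  then show "cube_coord A c j < n" "cube_coord A c j div k = j"
    and "j \<noteq> c div k \<Longrightarrow> g (cube_coord A c j mod k) = block_sum j A"
    using coord[OF assms(3)] assms(2) unfolding cube_coord_def by auto
qed

(* In the subcube, a block l other than that of c has vanishing sum exactly at the vertices
   X containing l, since toggling cube_coord A c l cancels the block sum of A. *)
lemma block_sum_cube_map:
  assumes A: "\<not> degenerate A" "finite A" and c: "c < n"
    and Y: "Y \<subseteq> {..<m}" and l: "l < m" "l \<noteq> c div k"
  shows "block_sum l (cube_map A (cube_coord A c) Y) = (if l \<in> Y then {} else block_sum l A)"
proof -
  let ?phi = "cube_coord A c" and ?blk = "{x. x div k = l}"
  have blk: "?phi y div k = y" if "y \<in> Y" for y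
    using cube_coord(2)[OF A(1) c] Y that by auto
  have local: "cube_map A ?phi Y \<inter> ?blk = sym_diff A (?phi ` Y \<inter> ?blk) \<inter> ?blk"
    unfolding cube_map_def by blast
  show ?thesis
  proof (cases "l \<in> Y")
    case True
    have "?phi ` Y \<inter> ?blk = {?phi l}" using blk True by force
    then have "block_sum l (cube_map A ?phi Y) = block_sum l (sym_diff A {?phi l})"
      using local by (intro block_sum_local) simp
    also have "\<dots> = sym_diff (block_sum l A) (g (?phi l mod k))"
      by (rule block_sum_toggle[OF A(2) cube_coord(2)[OF A(1) c l(1)]])
    also have "\<dots> = {}" using cube_coord(3)[OF A(1) c l] by simp
    finally show ?thesis using True by simp
  next
    case False
    have "?phi ` Y \<inter> ?blk = {}" using blk False by force
    then have "block_sum l (cube_map A ?phi Y) = block_sum l A"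
      using local by (intro block_sum_local) simp
    then show ?thesis using False by simp
  qed
qed

lemma cube_coord_embedding:
  assumes "\<not> degenerate A" "c < n"
  shows "inj_on (cube_coord A c) {..<m}" "cube_coord A c ` {..<m} \<subseteq> {..<n}"
proof -
  show "inj_on (cube_coord A c) {..<m}"
    by (rule inj_onI) (metis cube_coord(2)[OF assms] lessThan_iff)
  show "cube_coord A c ` {..<m} \<subseteq> {..<n}" using cube_coord(1)[OF assms] by auto
qed

(* Every edge of the subcube except the one from A in direction c has a degenerate endpoint:
   an edge in a direction j other than the block of c has the block sum j vanishing at its
   upper end, and an edge in the direction of c away from A starts at a vertex X containing
   some other block l, whose sum vanishes there. *)
lemma subcube_edge:
  assumes A: "\<not> degenerate A" "A \<subseteq> {..<n}" and c: "c < n"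
    and X: "X \<subseteq> {..<m}" and j: "j < m" "j \<notin> X" and other: "j \<noteq> c div k \<or> X \<noteq> {}"
  shows "{cube_map A (cube_coord A c) X, cube_map A (cube_coord A c) (insert j X)} \<in> sat_graph"
proof -
  let ?F = "cube_map A (cube_coord A c)"
  note emb = cube_coord_embedding[OF A(1) c]
  have "finite A" using A(2) finite_subset by blast
  have deg: "degenerate (?F Y)" if "Y \<subseteq> {..<m}" "l \<in> Y" "l \<noteq> c div k" for Y l
  proof -
    have "l < m" using that(1,2) by auto
    then have "block_sum l (?F Y) = {}"
      using block_sum_cube_map[OF A(1) \<open>finite A\<close> c that(1) \<open>l < m\<close>] that(2,3) by simp
    then show ?thesis using \<open>l < m\<close> unfolding degenerate_def by blast
  qed
  have "?F X \<subseteq> {..<n}" by (rule cube_map_vert[OF A(2) emb(2) X])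
  moreover have "cube_coord A c j < n" using emb(2) j(1) by blast
  ultimately have edge: "{?F X, ?F (insert j X)} \<in> hyp_edges n"
    unfolding cube_map_insert[OF emb(1) X j] by (rule hyp_edge_toggle)
  have "degenerate (?F X) \<or> degenerate (?F (insert j X))"
  proof (cases "j = c div k")
    case True
    then obtain l where "l \<in> X" using other by blast
    moreover have "l \<noteq> c div k" using \<open>l \<in> X\<close> True j(2) by blast
    ultimately show ?thesis using deg X by blast
  next
    case False
    then show ?thesis using deg[of "insert j X" j] X j by blast
  qed
  then show ?thesis using edge unfolding sat_graph_def by blast
qed

(* Every missing edge {A, insert c A} lies on the subcube of A in direction c, a copy of Q_m
   whose other edges all belong to sat_graph, so adding it increases the number of copies. *)
lemma sat_graph_semi_saturated: "semi_saturated n (hyp_verts m) (hyp_edges m) sat_graph"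
  unfolding semi_saturated_def
proof (intro conjI ballI)
  show sub: "sat_graph \<subseteq> hyp_edges n" unfolding sat_graph_def by blast
  fix e assume e: "e \<in> hyp_edges n - sat_graph"
  then obtain A c where Ac: "e = {A, insert c A}" "A \<subseteq> {..<n}" "c < n" "c \<notin> A"
    unfolding hyp_edges_lower by blast
  have nondeg: "\<not> degenerate A" using e Ac(1) unfolding sat_graph_def by blast
  define F where "F = cube_map A (cube_coord A c)"
  note emb = cube_coord_embedding[OF nondeg Ac(3)]
  have F_e: "F {} = A" "F {c div k} = insert c A"
    using Ac(4) unfolding F_def cube_map_def cube_coord_def by auto
  have image_edges: "(\<lambda>d. F ` d) ` hyp_edges m \<subseteq> insert e sat_graph"
  proof (rule image_subsetI)
    fix d assume "d \<in> hyp_edges m"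
    then obtain X j where d: "d = {X, insert j X}" "X \<subseteq> {..<m}" "j < m" "j \<notin> X"
      unfolding hyp_edges_lower by blast
    show "F ` d \<in> insert e sat_graph"
    proof (cases "j = c div k \<and> X = {}")
      case True
      then show ?thesis using F_e Ac(1) d(1) by simp
    next
      case False
      then show ?thesis using subcube_edge[OF nondeg Ac(2,3) d(2-4)] d(1) unfolding F_def by simp
    qed
  qed
  have e_image: "e \<in> (\<lambda>d. F ` d) ` hyp_edges m"
  proof -
    have "{{}, {c div k}} \<in> hyp_edges m"
      unfolding hyp_edges_lower using block_lt[OF Ac(3)] by blast
    moreover have "F ` {{}, {c div k}} = e" using F_e Ac(1) by simp
    ultimately show ?thesis by blast
  qed
  have verts: "F ` hyp_verts m \<subseteq> hyp_verts n"
    using cube_map_vert[OF Ac(2) emb(2)] unfolding F_def hyp_verts_def by blast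
  have inj: "inj_on F (hyp_verts m)"
    using cube_map_inj[OF emb(1)] unfolding F_def hyp_verts_def .
  from e have "e \<in> hyp_edges n" "e \<notin> sat_graph" by auto
  from new_copy_card[OF sub this inj verts image_edges e_image]
  show "card (copies (hyp_verts m) (hyp_edges m) (hyp_verts n) sat_graph)
      < card (copies (hyp_verts m) (hyp_edges m) (hyp_verts n) (insert e sat_graph))" .
qed

end

theorem mainTheorem7:
  fixes m t n :: nat
  assumes "m \<ge> 1" and "t \<ge> 1" and "n = m * (2 ^ t - 1)"
  shows "real (s_sat n (hyp_verts m) (hyp_edges m))
           \<le> (real m ^ 2 / 2 + real m / 2) * 2 ^ n"
proof -
  let ?labels = "Pow {..<t} - {{}} :: nat set set"
  have "card ?labels = 2 ^ t - 1" by (simp add: card_Pow)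
  moreover obtain g :: "nat \<Rightarrow> nat set" where "bij_betw g {0..<card ?labels} ?labels"
    using ex_bij_betw_nat_finite[of ?labels] by auto
  ultimately have g: "bij_betw g {..<2 ^ t - 1} ?labels" by (simp add: atLeast0LessThan)
  interpret block_labelling m t "2 ^ t - 1" n g
    using assms(2,3) g by unfold_locales
  have "s_sat n (hyp_verts m) (hyp_edges m) \<le> card sat_graph"
    by (rule s_sat_le[OF sat_graph_semi_saturated])
  then have "2 * s_sat n (hyp_verts m) (hyp_edges m) \<le> m * (m + 1) * 2 ^ n"
    using sat_graph_card by linarith
  then have "real (2 * s_sat n (hyp_verts m) (hyp_edges m)) \<le> real (m * (m + 1) * 2 ^ n)"
    by (rule of_nat_mono)
  then show ?thesis by (simp add: power2_eq_square field_simps)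
qed

end
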